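(* Let $\mathbf{R}^{\Rightarrow}$ be a finite coherent set of normality conditionals with LM-sequence $(\mathcal{E}_i)_{i\geq 0}$. Then for every $i\geq 0$ with $\mathcal{E}_i\neq\emptyset$, $\mathcal{E}_{i+1}\subsetneq\mathcal{E}_i$.
   Context: Boolean formulas over propositional letters; $\models_{\mathrm{PL}}$ classical entailment. A normality conditional is $A\Rightarrow B$ with $A,B$ Boolean; its body is $b(A\Rightarrow B)=A$. For $X\subseteq\mathbf{R}^{\Rightarrow}$, $\mathrm{m}(X)=\{A\rightarrow B:A\Rightarrow B\in X\}$. $\mathbf{R}^{\Rightarrow}$ is coherent if there is no nonempty $X\subseteq\mathbf{R}^{\Rightarrow}$ with $\mathrm{m}(X)\models_{\mathrm{PL}}\bigwedge_{r\in X}\neg b(r)$. Define $\varepsilon(X)=\{A\Rightarrow B\in\mathbf{R}^{\Rightarrow}:\mathrm{m}(X)\models_{\mathrm{PL}}\neg A\}$ and the LM-sequence by $\mathcal{E}_0=\mathbf{R}^{\Rightarrow}$, $\mathcal{E}_{i+1}=\varepsilon(\mathcal{E}_i)$. *)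

theory Defs
  imports Main
begin

datatype 'a form =
    Atom 'a
  | Bot
  | Top
  | Neg "'a form"
  | And "'a form" "'a form"
  | Or "'a form" "'a form"
  | Imp "'a form" "'a form"

primrec sat :: "('a \<Rightarrow> bool) \<Rightarrow> 'a form \<Rightarrow> bool" where
  "sat v (Atom p) = v p"
| "sat v Bot = False"
| "sat v Top = True"
| "sat v (Neg A) = (\<not> sat v A)"
| "sat v (And A B) = (sat v A \<and> sat v B)"
| "sat v (Or A B) = (sat v A \<or> sat v B)"
| "sat v (Imp A B) = (sat v A \<longrightarrow> sat v B)"

definition entails :: "'a form set \<Rightarrow> 'a form \<Rightarrow> bool" where
  "entails \<Gamma> A \<longleftrightarrow> (\<forall>v. (\<forall>G\<in>\<Gamma>. sat v G) \<longrightarrow> sat v A)"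

text \<open>A normality conditional A \<Rightarrow> B is represented as the pair (A, B).\<close>
type_synonym 'a cond = "'a form \<times> 'a form"

definition body :: "'a cond \<Rightarrow> 'a form" where
  "body r = fst r"

definition mat :: "'a cond set \<Rightarrow> 'a form set" where
  "mat X = (\<lambda>(A, B). Imp A B) ` X"

text \<open>Big conjunction over a finite set of formulas: entailing it is
  equivalent to entailing each conjunct, so we state it conjunct-wise via
  a set-based conjunction semantics.\<close>
definition entails_conj :: "'a form set \<Rightarrow> 'a form set \<Rightarrow> bool" where
  "entails_conj \<Gamma> \<Delta> \<longleftrightarrow> (\<forall>v. (\<forall>G\<in>\<Gamma>. sat v G) \<longrightarrow> (\<forall>D\<in>\<Delta>. sat v D))"

definition coherent :: "'a cond set \<Rightarrow> bool" where
  "coherent R \<longleftrightarrow>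
     \<not> (\<exists>X. X \<subseteq> R \<and> X \<noteq> {} \<and> entails_conj (mat X) ((\<lambda>r. Neg (body r)) ` X))"

definition eps :: "'a cond set \<Rightarrow> 'a cond set \<Rightarrow> 'a cond set" where
  "eps R X = {(A, B) \<in> R. entails (mat X) (Neg A)}"

primrec LM :: "'a cond set \<Rightarrow> nat \<Rightarrow> 'a cond set" where
  "LM R 0 = R"
| "LM R (Suc i) = eps R (LM R i)"

end

theory Submission
  imports Defs
begin

text \<open>The LM-sequence decreases because \<open>\<epsilon>\<close> is monotone and \<open>\<E>\<^sub>1 \<subseteq> \<E>\<^sub>0\<close>.
  It decreases strictly while nonempty: a nonempty \<open>X \<subseteq> \<E>\<^sub>i\<close> with
  \<open>X \<subseteq> \<epsilon>(X)\<close> has \<open>m(X)\<close> entailing the negation of every body in \<open>X\<close>,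
  which is exactly what coherence forbids.\<close>

lemma eps_subset: "eps R X \<subseteq> R"
  by (auto simp: eps_def)

lemma eps_mono: "X \<subseteq> Y \<Longrightarrow> eps R X \<subseteq> eps R Y"
  unfolding eps_def entails_def mat_def by fast

lemma LM_subset: "LM R i \<subseteq> R"
  by (cases i) (simp_all add: eps_subset)

lemma LM_Suc_subset: "LM R (Suc i) \<subseteq> LM R i"
proof (induction i)
  case 0
  show ?case by (simp add: eps_subset)
next
  case (Suc i)
  then show ?case by (simp add: eps_mono)
qed

lemma coherent_not_subset_eps:
  assumes "coherent R" and "X \<subseteq> R" and "X \<noteq> {}"
  shows "\<not> X \<subseteq> eps R X"
proof
  assume sub: "X \<subseteq> eps R X"
  have "entails (mat X) (Neg (body r))" if "r \<in> X" for r
    using sub that by (cases r) (auto simp: eps_def body_def)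
  then have "entails_conj (mat X) ((\<lambda>r. Neg (body r)) ` X)"
    unfolding entails_conj_def entails_def by blast
  then show False
    using assms unfolding coherent_def by blast
qed

theorem fact1:
  fixes R :: "'a cond set" and i :: nat
  assumes "finite R" and "coherent R" and "LM R i \<noteq> {}"
  shows "LM R (Suc i) \<subset> LM R i"
proof -
  have "\<not> LM R i \<subseteq> LM R (Suc i)"
    using coherent_not_subset_eps[OF assms(2) LM_subset assms(3)] by simp
  then show ?thesis
    using LM_Suc_subset by blast
qed

end
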